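(* For every $\eta>0$ and every bounded measurable $f:\mathbb R^d\to\mathbb R$, $$\|\nabla\tilde{\mathcal P}_\eta f\|_\infty\le\|f\|_\infty(1+C_{\mathrm{op}}\eta)\|\sigma^{-1}\|^2_{\mathrm{op}}\|\sigma\|_{\mathrm{op}}\eta^{-1/2}d^{1/2},$$ so the chain $(\tilde X^\eta_k)_{k\in\mathbb N_0}$ is strong Feller. Furthermore, $(\tilde X^\eta_k)_{k\in\mathbb N_0}$ is irreducible (for all $x,y\in\mathbb R^d$, $r>0$ and $k\ge1$, $\tilde{\mathcal P}^k_\eta(x,B(y,r))>0$).
   Context: Fix $d\ge1$, $\alpha>0$, $\beta\in\mathbb R$, $p\in\mathbb R^d$ with nonnegative entries summing to $1$, $\mathrm e=(1,\dots,1)'$, positive rates $v$, a sub-stochastic matrix $P$ with $P_{ii}=0$ and $I-P$ invertible; $R=(I-P')\mathrm{diag}(v)$, assume $\mathrm e'R^{-1}p=1$, $\gamma=R^{-1}p$. $\sigma$ is a $d\times d$ matrix with $\sigma\sigma'=\mathrm{diag}(p)c_a^2+H^{(0)}+\sum_{k}\gamma_kv_kH^{(k)}+(I-P')\mathrm{diag}(v)\mathrm{diag}(\gamma)(I-P)$, $c_a^2>0$, $H^{(k)}_{ii}=P_{ki}(1-P_{ki})$, $H^{(k)}_{ij}=-P_{ki}P_{kj}$ ($i\ne j$), $H^{(0)}_{ii}=p_i(1-p_i)$, $H^{(0)}_{ij}=-p_ip_j$ ($i\ne j$), and $\xi'\sigma\sigma'\xi\ge c\,\xi'\xi$ for some $c>0$.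 $g(x)=-\beta p-Rx+(R-\alpha I)p(\mathrm e'x)^+$. The Euler–Maruyama chain is $\tilde X^\eta_{k+1}=\tilde X^\eta_k+g(\tilde X^\eta_k)\eta+\sqrt\eta\sigma\xi_{k+1}$ with i.i.d. standard Gaussian $\xi_k$; $\tilde{\mathcal P}_\eta(x,\cdot)$ is its one-step transition kernel, $\tilde{\mathcal P}_\eta f(x)=\int f(y)\tilde{\mathcal P}_\eta(x,\mathrm dy)$, $\tilde{\mathcal P}^k_\eta$ its $k$-step kernel; $B(y,r)$ is the closed ball. $C_{\mathrm{op}}=\|R\|_{\mathrm{op}}+\|(R-\alpha I)p\mathrm e'\|_{\mathrm{op}}$; $\|\cdot\|_{\mathrm{op}}$ is the operator norm. *)

theory Defs
  imports "HOL-Analysis.Analysis" "HOL-Probability.Probability"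
begin

definition diagm :: "real^'n \<Rightarrow> real^'n^'n" where
  "diagm v = (\<chi> i j. if i = j then v $ i else 0)"

definition onesv :: "real^'n" where
  "onesv = (\<chi> i. 1)"

definition outer :: "real^'n \<Rightarrow> real^'n \<Rightarrow> real^'n^'n" where
  "outer a b = (\<chi> i j. a $ i * b $ j)"

definition Rmat :: "real^'n^'n \<Rightarrow> real^'n \<Rightarrow> real^'n^'n" where
  "Rmat P v = (mat 1 - transpose P) ** diagm v"

definition Hk :: "real^'n^'n \<Rightarrow> 'n \<Rightarrow> real^'n^'n" where
  "Hk P k = (\<chi> i j. if i = j then P $ k $ i * (1 - P $ k $ i) else - (P $ k $ i * P $ k $ j))"

definition H0 :: "real^'n \<Rightarrow> real^'n^'n" where
  "H0 p = (\<chi> i j. if i = j then p $ i * (1 - p $ i) else - (p $ i * p $ j))"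

definition drift :: "real \<Rightarrow> real \<Rightarrow> real^'n \<Rightarrow> real^'n^'n \<Rightarrow> real^'n \<Rightarrow> real^'n" where
  "drift \<alpha> \<beta> p R x = - (\<beta> *\<^sub>R p) - R *v x + max 0 (onesv \<bullet> x) *\<^sub>R ((R - mat \<alpha>) *v p)"

definition std_gauss :: "(real^'n) measure" where
  "std_gauss = density lborel (\<lambda>z. ennreal (\<Prod>i\<in>UNIV. std_normal_density (z $ i)))"

text \<open>One-step transition operator of the Euler--Maruyama chain:
  (P_eta f)(x) = E f(x + g(x) eta + sqrt eta sigma xi).\<close>
definition EM_op :: "real \<Rightarrow> real \<Rightarrow> real \<Rightarrow> real^'n \<Rightarrow> real^'n^'n \<Rightarrow> real^'n^'n
    \<Rightarrow> (real^'n \<Rightarrow> real) \<Rightarrow> real^'n \<Rightarrow> real" where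
  "EM_op \<eta> \<alpha> \<beta> p R \<sigma> f x =
     (\<integral>z. f (x + \<eta> *\<^sub>R drift \<alpha> \<beta> p R x + sqrt \<eta> *\<^sub>R (\<sigma> *v z)) \<partial>std_gauss)"

definition supnorm :: "('a \<Rightarrow> real) \<Rightarrow> real" where
  "supnorm f = (SUP x. \<bar>f x\<bar>)"

definition opnorm :: "real^'n^'m \<Rightarrow> real" where
  "opnorm A = onorm (\<lambda>x. A *v x)"

end

theory Submission
  imports Defs
begin

(* Write the one-step operator as a Gaussian expectation, P f x = E f (m x + sqrt eta sigma Z),
   with mean m x = x + eta g(x). Moving the mean from m y to m x amounts to shifting Z by
   w = eta^(-1/2) sigma^-1 (m x - m y), and shifting the standard Gaussian by w changes the
   expectation of a function bounded by B by at most B times the L1 distance of the two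
   densities. That distance is subadditive in w, so it reduces to the coordinate axes, where the
   fundamental theorem of calculus and E|Z_1| = sqrt (2/pi) bound it by sqrt (2/pi) |w_i|,
   and Cauchy-Schwarz turns the sum into at most sqrt d |w|. As g is C_op-Lipschitz, m is
   (1 + C_op eta)-Lipschitz.
   Irreducibility: the Gaussian density is positive everywhere and sigma is invertible, so
   P h > 0 everywhere as soon as h > 0 on some ball; this applies to the indicator of B(y, r)
   and then to every further iterate. *)

lemma std_normal_density_has_real_derivative:
  "(std_normal_density has_real_derivative (- x * std_normal_density x)) (at x within S)"
  unfolding std_normal_density_def[abs_def]
  by (rule derivative_eq_intros refl | simp)+

lemma continuous_on_std_normal_density: "continuous_on S std_normal_density"
  unfolding std_normal_density_def[abs_def] by (auto intro!: continuous_intros)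

lemma std_normal_density_diff_le_nn_integral:
  fixes a b :: real
  assumes "a \<le> b"
  shows "ennreal \<bar>std_normal_density b - std_normal_density a\<bar>
     \<le> (\<integral>\<^sup>+t. ennreal (indicator {a..b} t * \<bar>t * std_normal_density t\<bar>) \<partial>lborel)"
proof -
  let ?f = "\<lambda>t. - t * std_normal_density t"
  have cont: "continuous_on {a..b} ?f"
    by (intro continuous_intros continuous_on_std_normal_density)
  have FTC: "(\<integral>t. indicator {a..b} t *\<^sub>R ?f t \<partial>lborel) = std_normal_density b - std_normal_density a"
    using assms cont std_normal_density_has_real_derivative
    by (intro integral_FTC_atLeastAtMost) (simp_all add: has_real_derivative_iff_has_vector_derivative)
  have "integrable lborel (\<lambda>t. indicator {a..b} t *\<^sub>R ?f t)"
    using borel_integrable_atLeastAtMost'[OF cont] unfolding set_integrable_def .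
  then have "norm (\<integral>t. indicator {a..b} t *\<^sub>R ?f t \<partial>lborel)
     \<le> (\<integral>\<^sup>+t. norm (indicator {a..b} t *\<^sub>R ?f t) \<partial>lborel)"
    by (rule integral_norm_bound_ennreal)
  also have "\<dots> = (\<integral>\<^sup>+t. ennreal (indicator {a..b} t * \<bar>t * std_normal_density t\<bar>) \<partial>lborel)"
    by (intro nn_integral_cong) (auto simp: indicator_def abs_mult)
  finally show ?thesis
    unfolding FTC by simp
qed

lemma nn_integral_abs_mult_std_normal_density:
  "(\<integral>\<^sup>+t. ennreal \<bar>t * std_normal_density t\<bar> \<partial>lborel) = ennreal (sqrt (2 / pi))"
proof -
  have "has_bochner_integral lborel (\<lambda>t. std_normal_density t * \<bar>t\<bar> ^ (2 * 0 + 1)) (sqrt (2 / pi) * 2 ^ 0 * fact 0)"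
    by (rule std_normal_moment_abs_odd)
  then have "has_bochner_integral lborel (\<lambda>t. \<bar>t * std_normal_density t\<bar>) (sqrt (2 / pi))"
    by (simp add: abs_mult mult.commute)
  then show ?thesis
    by (simp add: nn_integral_eq_integral integrable.intros has_bochner_integral_integral_eq)
qed

lemma nn_integral_std_normal_density_shift_diff:
  fixes a :: real
  shows "(\<integral>\<^sup>+s. ennreal \<bar>std_normal_density (s - a) - std_normal_density s\<bar> \<partial>lborel)
     \<le> ennreal (\<bar>a\<bar> * sqrt (2 / pi))"
proof -
  let ?h = "\<lambda>t. \<bar>t * std_normal_density t\<bar>"
  let ?I = "\<lambda>t. {min t (t + a)..max t (t + a)}"
  have [measurable]: "?h \<in> borel_measurable borel"
    by (intro borel_measurable_continuous_onI continuous_intros continuous_on_std_normal_density)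
  have "(\<integral>\<^sup>+s. ennreal \<bar>std_normal_density (s - a) - std_normal_density s\<bar> \<partial>lborel)
     \<le> (\<integral>\<^sup>+s. (\<integral>\<^sup>+t. ennreal (indicator {min (s - a) s..max (s - a) s} t * ?h t) \<partial>lborel) \<partial>lborel)"
  proof (intro nn_integral_mono)
    fix s
    have "\<bar>std_normal_density (s - a) - std_normal_density s\<bar>
        = \<bar>std_normal_density (max (s - a) s) - std_normal_density (min (s - a) s)\<bar>"
      by (cases "a \<ge> 0") (auto simp: min_def max_def)
    then show "ennreal \<bar>std_normal_density (s - a) - std_normal_density s\<bar>
        \<le> (\<integral>\<^sup>+t. ennreal (indicator {min (s - a) s..max (s - a) s} t * ?h t) \<partial>lborel)"
      using std_normal_density_diff_le_nn_integral[of "min (s - a) s" "max (s - a) s"] by simp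
  qed
  also have "\<dots> = (\<integral>\<^sup>+s. (\<integral>\<^sup>+t. ennreal (indicator (?I t) s * ?h t) \<partial>lborel) \<partial>lborel)"
    by (intro nn_integral_cong) (auto simp: indicator_def min_def max_def)
  also have "\<dots> = (\<integral>\<^sup>+t. (\<integral>\<^sup>+s. ennreal (indicator (?I t) s * ?h t) \<partial>lborel) \<partial>lborel)"
  proof (rule lborel_pair.Fubini')
    have "Measurable.pred (lborel \<Otimes>\<^sub>M lborel)
        (\<lambda>x. min (fst x) (fst x + a) \<le> snd x \<and> snd x \<le> max (fst x) (fst x + a))"
      by measurable
    then show "(\<lambda>(t, s). ennreal (indicator (?I t) s * ?h t)) \<in> borel_measurable (lborel \<Otimes>\<^sub>M lborel)"
      unfolding indicator_def atLeastAtMost_iff case_prod_beta by measurable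
  qed
  also have "\<dots> = (\<integral>\<^sup>+t. ennreal (?h t) * ennreal \<bar>a\<bar> \<partial>lborel)"
  proof (intro nn_integral_cong)
    fix t
    have "(\<integral>\<^sup>+s. ennreal (indicator (?I t) s * ?h t) \<partial>lborel)
        = ennreal (?h t) * emeasure lborel (?I t)"
      by (subst nn_integral_cmult_indicator[symmetric]) (auto intro!: nn_integral_cong simp: indicator_def)
    also have "emeasure lborel (?I t) = ennreal \<bar>a\<bar>"
      by (cases "a \<ge> 0") (auto simp: min_def max_def)
    finally show "(\<integral>\<^sup>+s. ennreal (indicator (?I t) s * ?h t) \<partial>lborel) = ennreal (?h t) * ennreal \<bar>a\<bar>" .
  qed
  also have "\<dots> = ennreal (sqrt (2 / pi)) * ennreal \<bar>a\<bar>"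
    by (simp add: nn_integral_multc nn_integral_abs_mult_std_normal_density)
  finally show ?thesis
    by (simp add: ennreal_mult' mult.commute)
qed

definition std_gauss_density :: "real^'n \<Rightarrow> real" where
  "std_gauss_density z = (\<Prod>i\<in>UNIV. std_normal_density (z $ i))"

lemma std_gauss_density_pos: "std_gauss_density z > 0"
  unfolding std_gauss_density_def by (intro prod_pos) (auto simp: std_normal_density_def)

lemma continuous_on_std_gauss_density: "continuous_on S std_gauss_density"
  unfolding std_gauss_density_def[abs_def]
  by (intro continuous_intros continuous_on_compose2[OF continuous_on_std_normal_density]) auto

lemma borel_measurable_std_gauss_density[measurable]: "std_gauss_density \<in> borel_measurable borel"
  by (intro borel_measurable_continuous_onI continuous_on_std_gauss_density)

lemma std_gauss_eq_density: "std_gauss = density lborel (\<lambda>z. ennreal (std_gauss_density z))"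
  unfolding std_gauss_def std_gauss_density_def ..

lemma prod_Basis_vec_axis_index:
  "(\<Prod>b\<in>(Basis :: (real^'n) set). h (axis_index b)) = (\<Prod>i\<in>UNIV. h i)"
proof -
  have Basis: "(Basis :: (real^'n) set) = (\<lambda>i. axis i 1) ` UNIV"
    unfolding Basis_vec_def by auto
  have "inj (\<lambda>i. axis i (1::real) :: real^'n)"
    by (auto intro!: injI simp: axis_eq_axis)
  then show ?thesis
    unfolding Basis by (subst prod.reindex) simp_all
qed

lemma nn_integral_lborel_prod_vec:
  fixes h :: "'n::finite \<Rightarrow> real \<Rightarrow> real"
  assumes [measurable]: "\<And>i. h i \<in> borel_measurable borel" and nonneg: "\<And>i x. 0 \<le> h i x"
  shows "(\<integral>\<^sup>+z. ennreal (\<Prod>i\<in>UNIV. h i ((z :: real^'n) $ i)) \<partial>lborel)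
    = (\<Prod>i\<in>UNIV. \<integral>\<^sup>+x. ennreal (h i x) \<partial>lborel)"
proof -
  have "(\<integral>\<^sup>+z. ennreal (\<Prod>i\<in>UNIV. h i ((z :: real^'n) $ i)) \<partial>lborel)
      = (\<integral>\<^sup>+z. (\<Prod>b\<in>(Basis :: (real^'n) set). ennreal (h (axis_index b) (z \<bullet> b))) \<partial>lborel)"
  proof (intro nn_integral_cong)
    fix z :: "real^'n"
    have "(\<Prod>b\<in>(Basis :: (real^'n) set). ennreal (h (axis_index b) (z \<bullet> b)))
        = (\<Prod>b\<in>(Basis :: (real^'n) set). ennreal (h (axis_index b) (z $ axis_index b)))"
    proof (intro prod.cong refl)
      fix b :: "real^'n"
      assume "b \<in> Basis"
      then obtain i where "b = axis i 1"
        unfolding Basis_vec_def by auto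
      then show "ennreal (h (axis_index b) (z \<bullet> b)) = ennreal (h (axis_index b) (z $ axis_index b))"
        by (simp add: inner_axis)
    qed
    also have "\<dots> = (\<Prod>i\<in>UNIV. ennreal (h i (z $ i)))"
      by (rule prod_Basis_vec_axis_index)
    finally show "ennreal (\<Prod>i\<in>UNIV. h i (z $ i))
        = (\<Prod>b\<in>(Basis :: (real^'n) set). ennreal (h (axis_index b) (z \<bullet> b)))"
      by (simp add: prod_ennreal nonneg)
  qed
  also have "\<dots> = (\<Prod>b\<in>(Basis :: (real^'n) set). \<integral>\<^sup>+x. ennreal (h (axis_index b) x) \<partial>lborel)"
    by (rule nn_integral_lborel_prod) (auto simp: nonneg)
  also have "\<dots> = (\<Prod>i\<in>UNIV. \<integral>\<^sup>+x. ennreal (h i x) \<partial>lborel)"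
    by (rule prod_Basis_vec_axis_index)
  finally show ?thesis .
qed

lemma nn_integral_std_normal_density: "(\<integral>\<^sup>+x. ennreal (std_normal_density x) \<partial>lborel) = 1"
  by (subst nn_integral_eq_integral) auto

lemma nn_integral_std_gauss_density: "(\<integral>\<^sup>+z. ennreal (std_gauss_density (z :: real^'n)) \<partial>lborel) = 1"
  unfolding std_gauss_density_def
  by (subst nn_integral_lborel_prod_vec) (auto simp: nn_integral_std_normal_density)

lemma prob_space_std_gauss: "prob_space (std_gauss :: (real^'n) measure)"
  by (rule prob_spaceI)
    (simp add: std_gauss_eq_density emeasure_density nn_integral_std_gauss_density)

lemma integral_std_gauss:
  fixes F :: "real^'n \<Rightarrow> real"
  assumes "F \<in> borel_measurable borel"
  shows "(\<integral>z. F z \<partial>std_gauss) = (\<integral>u. std_gauss_density u * F u \<partial>lborel)"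
  unfolding std_gauss_eq_density
  using assms by (subst integral_density) (auto simp: less_imp_le[OF std_gauss_density_pos])

lemma nn_integral_lborel_translate:
  fixes F :: "'a::euclidean_space \<Rightarrow> ennreal"
  assumes [measurable]: "F \<in> borel_measurable borel"
  shows "(\<integral>\<^sup>+u. F (u + c) \<partial>lborel) = (\<integral>\<^sup>+u. F u \<partial>lborel)"
  using nn_integral_distr[of "(+) c" lborel borel F]
  by (simp add: lborel_distr_plus add.commute)

lemma integral_lborel_translate:
  fixes F :: "'a::euclidean_space \<Rightarrow> real"
  assumes [measurable]: "F \<in> borel_measurable borel"
  shows "(\<integral>u. F (u + c) \<partial>lborel) = (\<integral>u. F u \<partial>lborel)"
  using integral_distr[of "(+) c" lborel borel F]
  by (simp add: lborel_distr_plus add.commute)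

definition gauss_shift_L1 :: "real^'n \<Rightarrow> ennreal" where
  "gauss_shift_L1 d = (\<integral>\<^sup>+u. ennreal \<bar>std_gauss_density (u - d) - std_gauss_density u\<bar> \<partial>lborel)"

lemma gauss_shift_L1_zero: "gauss_shift_L1 0 = 0"
  unfolding gauss_shift_L1_def by simp

lemma gauss_shift_L1_add: "gauss_shift_L1 (a + b) \<le> gauss_shift_L1 a + gauss_shift_L1 b"
proof -
  let ?g = std_gauss_density
  have "gauss_shift_L1 (a + b)
      \<le> (\<integral>\<^sup>+u. ennreal \<bar>?g (u - a - b) - ?g (u - a)\<bar> + ennreal \<bar>?g (u - a) - ?g u\<bar> \<partial>lborel)"
    unfolding gauss_shift_L1_def
    by (intro nn_integral_mono) (auto simp: ennreal_plus[symmetric] diff_diff_eq simp del: ennreal_plus)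
  also have "\<dots> = (\<integral>\<^sup>+u. ennreal \<bar>?g (u - a - b) - ?g (u - a)\<bar> \<partial>lborel) + gauss_shift_L1 a"
    unfolding gauss_shift_L1_def by (rule nn_integral_add) auto
  also have "(\<integral>\<^sup>+u. ennreal \<bar>?g (u - a - b) - ?g (u - a)\<bar> \<partial>lborel) = gauss_shift_L1 b"
    unfolding gauss_shift_L1_def
    using nn_integral_lborel_translate[of "\<lambda>u. ennreal \<bar>?g (u - b) - ?g u\<bar>" "- a"] by simp
  finally show ?thesis
    by (simp add: add.commute)
qed

lemma gauss_shift_L1_sum:
  "finite S \<Longrightarrow> gauss_shift_L1 (\<Sum>i\<in>S. x i) \<le> (\<Sum>i\<in>S. gauss_shift_L1 (x i))"
proof (induction S rule: finite_induct)
  case empty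
  then show ?case by (simp add: gauss_shift_L1_zero)
next
  case (insert j S)
  then show ?case
    using gauss_shift_L1_add[of "x j" "sum x S"] by (simp add: add_left_mono order_trans)
qed

lemma gauss_shift_L1_axis: "gauss_shift_L1 (axis i a :: real^'n) \<le> ennreal (\<bar>a\<bar> * sqrt (2 / pi))"
proof -
  let ?h = "\<lambda>j s. if j = i then \<bar>std_normal_density (s - a) - std_normal_density s\<bar>
    else std_normal_density s"
  have factor: "\<bar>std_gauss_density (u - axis i a) - std_gauss_density u\<bar> = (\<Prod>j\<in>UNIV. ?h j (u $ j))"
    for u :: "real^'n"
  proof -
    have "std_gauss_density (u - axis i a) - std_gauss_density u
        = (std_normal_density (u $ i - a) - std_normal_density (u $ i))
          * (\<Prod>j\<in>UNIV - {i}. std_normal_density (u $ j))"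
      unfolding std_gauss_density_def
      by (subst (1 2) prod.remove[of UNIV i]) (auto simp: algebra_simps axis_def intro!: prod.cong)
    also have "\<bar>\<dots>\<bar> = (\<Prod>j\<in>UNIV. ?h j (u $ j))"
      by (subst prod.remove[of UNIV i])
        (auto simp: abs_mult prod_nonneg abs_of_nonneg intro!: prod.cong)
    finally show ?thesis .
  qed
  have "?h j \<in> borel_measurable borel" for j
    by (cases "j = i")
      (auto intro!: borel_measurable_continuous_onI continuous_intros
        continuous_on_compose2[OF continuous_on_std_normal_density])
  then have "gauss_shift_L1 (axis i a :: real^'n) = (\<Prod>j\<in>UNIV. \<integral>\<^sup>+x. ennreal (?h j x) \<partial>lborel)"
    unfolding gauss_shift_L1_def factor by (rule nn_integral_lborel_prod_vec) auto
  also have "\<dots> = (\<integral>\<^sup>+x. ennreal (?h i x) \<partial>lborel)"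
    by (subst prod.remove[of UNIV i]) (auto simp: nn_integral_std_normal_density)
  finally show ?thesis
    using nn_integral_std_normal_density_shift_diff[of a] by simp
qed

lemma sum_abs_le_sqrt_card_mult_norm:
  "(\<Sum>i\<in>UNIV. \<bar>d $ i\<bar>) \<le> sqrt (real CARD('n)) * norm (d :: real^'n)"
proof -
  have "(\<Sum>i\<in>UNIV. \<bar>d $ i\<bar>) \<le> L2_set (\<lambda>i. \<bar>d $ i\<bar>) UNIV * L2_set (\<lambda>_. 1::real) (UNIV :: 'n set)"
    using L2_set_mult_ineq[of "\<lambda>i. \<bar>d $ i\<bar>" "\<lambda>_. 1::real" "UNIV :: 'n set"] by simp
  also have "\<dots> = norm d * sqrt (real CARD('n))"
    by (simp add: norm_vec_def L2_set_constant)
  finally show ?thesis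
    by (simp add: mult.commute)
qed

lemma gauss_shift_L1_le: "gauss_shift_L1 (d :: real^'n) \<le> ennreal (sqrt (real CARD('n)) * norm d)"
proof -
  have "d = (\<Sum>i\<in>UNIV. axis i (d $ i))"
    by (simp add: vec_eq_iff sum_component axis_def)
  then have "gauss_shift_L1 d \<le> (\<Sum>i\<in>UNIV. gauss_shift_L1 (axis i (d $ i)))"
    by (metis finite gauss_shift_L1_sum)
  also have "\<dots> \<le> (\<Sum>i\<in>UNIV. ennreal (\<bar>d $ i\<bar> * sqrt (2 / pi)))"
    by (intro sum_mono gauss_shift_L1_axis)
  also have "\<dots> \<le> (\<Sum>i\<in>UNIV. ennreal \<bar>d $ i\<bar>)"
  proof (intro sum_mono ennreal_leI)
    have "sqrt (2 / pi) \<le> 1"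
      using pi_gt3 by simp
    then show "\<bar>d $ i\<bar> * sqrt (2 / pi) \<le> \<bar>d $ i\<bar>" for i
      by (simp add: mult_left_le)
  qed
  also have "\<dots> \<le> ennreal (sqrt (real CARD('n)) * norm d)"
    using sum_abs_le_sqrt_card_mult_norm[of d] by (simp add: sum_ennreal ennreal_leI)
  finally show ?thesis .
qed

lemma integrable_std_gauss_density_shift_mult:
  fixes F :: "real^'n \<Rightarrow> real"
  assumes [measurable]: "F \<in> borel_measurable borel" and bound: "\<forall>z. \<bar>F z\<bar> \<le> B"
  shows "integrable lborel (\<lambda>u. std_gauss_density (u - e) * F u)"
proof (rule Bochner_Integration.integrable_bound)
  have "(\<integral>\<^sup>+u. ennreal (std_gauss_density (u - e)) \<partial>lborel) = 1"
    using nn_integral_lborel_translate[of "\<lambda>u. ennreal (std_gauss_density u)" "- e"]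
    by (simp add: nn_integral_std_gauss_density)
  then have "integrable lborel (\<lambda>u. std_gauss_density (u - e))"
    by (intro integrableI_nonneg) (auto simp: less_imp_le[OF std_gauss_density_pos])
  then show "integrable lborel (\<lambda>u. B * std_gauss_density (u - e))"
    by simp
  show "AE u in lborel. norm (std_gauss_density (u - e) * F u) \<le> norm (B * std_gauss_density (u - e))"
    using bound std_gauss_density_pos[of "_ - e"] order_trans[OF abs_ge_zero bound[rule_format]]
    by (auto simp: abs_mult mult.commute intro!: mult_right_mono)
qed simp

lemma std_gauss_shift_expectation_diff_le:
  fixes F :: "real^'n \<Rightarrow> real"
  assumes [measurable]: "F \<in> borel_measurable borel" and bound: "\<forall>z. \<bar>F z\<bar> \<le> B"
  shows "\<bar>(\<integral>z. F (z + d) \<partial>std_gauss) - (\<integral>z. F z \<partial>std_gauss)\<bar> \<le> B * sqrt (real CARD('n)) * norm d"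
proof -
  let ?g = std_gauss_density
  have B: "0 \<le> B"
    using order_trans[OF abs_ge_zero bound[rule_format]] .
  have shifted: "(\<integral>z. F (z + e) \<partial>std_gauss) = (\<integral>u. ?g (u - e) * F u \<partial>lborel)" for e
    using integral_lborel_translate[of "\<lambda>u. ?g (u - e) * F u" e]
    by (simp add: integral_std_gauss)
  have diff: "(\<integral>z. F (z + d) \<partial>std_gauss) - (\<integral>z. F z \<partial>std_gauss)
      = (\<integral>u. (?g (u - d) - ?g u) * F u \<partial>lborel)"
    and integrable: "integrable lborel (\<lambda>u. (?g (u - d) - ?g u) * F u)"
    using shifted[of d] shifted[of 0]
      integrable_std_gauss_density_shift_mult[OF _ bound, of d]
      integrable_std_gauss_density_shift_mult[OF _ bound, of 0]
    by (simp_all add: left_diff_distrib)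
  have "ennreal \<bar>(\<integral>z. F (z + d) \<partial>std_gauss) - (\<integral>z. F z \<partial>std_gauss)\<bar>
      \<le> (\<integral>\<^sup>+u. norm ((?g (u - d) - ?g u) * F u) \<partial>lborel)"
    using integral_norm_bound_ennreal[OF integrable] by (simp add: diff)
  also have "\<dots> \<le> (\<integral>\<^sup>+u. ennreal B * ennreal \<bar>?g (u - d) - ?g u\<bar> \<partial>lborel)"
    using bound B
    by (intro nn_integral_mono)
      (auto simp: abs_mult ennreal_mult[symmetric] mult.commute intro!: mult_right_mono)
  also have "\<dots> = ennreal B * gauss_shift_L1 d"
    unfolding gauss_shift_L1_def by (rule nn_integral_cmult) measurable
  also have "\<dots> \<le> ennreal B * ennreal (sqrt (real CARD('n)) * norm d)"
    by (intro mult_left_mono gauss_shift_L1_le) auto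
  also have "\<dots> = ennreal (B * sqrt (real CARD('n)) * norm d)"
    using B by (simp add: ennreal_mult mult.assoc)
  finally show ?thesis
    using B by (subst (asm) ennreal_le_iff) auto
qed

lemma std_gauss_expectation_pos:
  fixes G :: "real^'n \<Rightarrow> real"
  assumes [measurable]: "G \<in> borel_measurable borel" and G01: "\<forall>z. 0 \<le> G z \<and> G z \<le> 1"
    and "\<rho> > 0" and pos: "\<forall>z\<in>ball z0 \<rho>. G z > 0"
  shows "(\<integral>z. G z \<partial>std_gauss) > 0"
proof -
  let ?g = std_gauss_density
  have int: "integrable lborel (\<lambda>u. ?g u * G u)"
    using integrable_std_gauss_density_shift_mult[of G 1 0] G01 by simp
  have nonneg: "AE u in lborel. 0 \<le> ?g u * G u"
    by (rule AE_I2) (simp add: G01 less_imp_le[OF std_gauss_density_pos])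
  have "\<not> (AE u in lborel. ?g u * G u = 0)"
  proof
    assume "AE u in lborel. ?g u * G u = 0"
    then have "AE u in lborel. u \<notin> ball z0 \<rho>"
    proof eventually_elim
      fix u
      assume "?g u * G u = 0"
      then show "u \<notin> ball z0 \<rho>"
        using pos std_gauss_density_pos[of u] by (metis less_irrefl mult_pos_pos)
    qed
    then have "emeasure lborel (ball z0 \<rho>) = 0"
      by (subst (asm) AE_iff_measurable[of "ball z0 \<rho>"]) auto
    then show False
      using content_ball_pos[OF \<open>\<rho> > 0\<close>, of z0] by (simp add: measure_def)
  qed
  then have "(\<integral>u. ?g u * G u \<partial>lborel) \<noteq> 0"
    using integral_nonneg_eq_0_iff_AE[OF int nonneg] by simp
  moreover have "(\<integral>u. ?g u * G u \<partial>lborel) \<ge> 0"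
    using nonneg by (rule integral_nonneg_AE)
  ultimately show ?thesis
    by (simp add: integral_std_gauss)
qed

lemma invertible_if_gram_pos_def:
  fixes \<sigma> :: "real^'n^'n"
  assumes "\<exists>c>0. \<forall>\<xi>. \<xi> \<bullet> ((\<sigma> ** transpose \<sigma>) *v \<xi>) \<ge> c * (\<xi> \<bullet> \<xi>)"
  shows "invertible \<sigma>"
proof -
  obtain c where "c > 0" and c: "\<forall>\<xi>. \<xi> \<bullet> ((\<sigma> ** transpose \<sigma>) *v \<xi>) \<ge> c * (\<xi> \<bullet> \<xi>)"
    using assms by auto
  have "x = 0" if "transpose \<sigma> *v x = 0" for x
  proof -
    have "c * (x \<bullet> x) \<le> 0"
      using c[rule_format, of x] that by (simp add: matrix_vector_mul_assoc[symmetric])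
    then show "x = 0"
      using \<open>c > 0\<close> by (simp add: mult_le_0_iff) (metis inner_ge_zero inner_eq_zero_iff order_antisym)
  qed
  then have "invertible (transpose \<sigma>)"
    by (simp add: invertible_left_inverse matrix_left_invertible_ker)
  then show ?thesis
    using transpose_invertible[of "transpose \<sigma>"] by simp
qed

lemma
  fixes A :: "real^'n^'n"
  assumes "invertible A"
  shows matrix_inv_right: "A ** matrix_inv A = mat 1"
    and matrix_inv_left: "matrix_inv A ** A = mat 1"
proof -
  have "A ** matrix_inv A = mat 1 \<and> matrix_inv A ** A = mat 1"
    using assms unfolding invertible_def matrix_inv_def by (rule someI_ex)
  then show "A ** matrix_inv A = mat 1" "matrix_inv A ** A = mat 1"
    by auto
qed

lemma norm_matrix_vector_mult_le_opnorm: "norm (A *v x) \<le> opnorm A * norm x"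
  unfolding opnorm_def by (rule onorm) simp

lemma opnorm_nonneg: "0 \<le> opnorm A"
  unfolding opnorm_def by (rule onorm_pos_le) simp

lemma one_le_opnorm_matrix_inv_mult_opnorm:
  fixes \<sigma> :: "real^'n^'n"
  assumes "invertible \<sigma>"
  shows "1 \<le> opnorm (matrix_inv \<sigma>) * opnorm \<sigma>"
proof -
  obtain i :: 'n where True by simp
  let ?w = "axis i (1::real) :: real^'n"
  have "1 = norm (matrix_inv \<sigma> *v (\<sigma> *v ?w))"
    by (simp add: matrix_vector_mul_assoc matrix_inv_left[OF assms])
  also have "\<dots> \<le> opnorm (matrix_inv \<sigma>) * norm (\<sigma> *v ?w)"
    by (rule norm_matrix_vector_mult_le_opnorm)
  also have "\<dots> \<le> opnorm (matrix_inv \<sigma>) * opnorm \<sigma>"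
    using norm_matrix_vector_mult_le_opnorm[of \<sigma> ?w]
    by (intro mult_left_mono opnorm_nonneg) auto
  finally show ?thesis .
qed

lemma outer_onesv_mult_vector: "((M :: real^'n^'n) ** outer p onesv) *v w = (onesv \<bullet> w) *\<^sub>R (M *v p)"
proof -
  have "outer p onesv *v w = (onesv \<bullet> w) *\<^sub>R p"
    by (simp add: vec_eq_iff matrix_vector_mult_def outer_def onesv_def inner_vec_def
        sum_distrib_left mult.commute)
  then show ?thesis
    by (simp add: matrix_vector_mul_assoc[symmetric] matrix_vector_mult_scaleR)
qed

lemma drift_lipschitz:
  fixes R :: "real^'n^'n"
  shows "norm (drift \<alpha> \<beta> p R x - drift \<alpha> \<beta> p R y)
    \<le> (opnorm R + opnorm ((R - mat \<alpha>) ** outer p onesv)) * norm (x - y)"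
proof -
  let ?M = "(R - mat \<alpha>) ** outer p onesv"
  let ?t = "max 0 (onesv \<bullet> x) - max 0 (onesv \<bullet> y)"
  have "drift \<alpha> \<beta> p R x - drift \<alpha> \<beta> p R y = - (R *v (x - y)) + ?t *\<^sub>R ((R - mat \<alpha>) *v p)"
    by (simp add: drift_def matrix_vector_mult_diff_distrib algebra_simps scaleR_diff_left)
  moreover have "norm (- (R *v (x - y))) \<le> opnorm R * norm (x - y)"
    using norm_matrix_vector_mult_le_opnorm[of R "x - y"] by simp
  moreover have "norm (?t *\<^sub>R ((R - mat \<alpha>) *v p)) \<le> opnorm ?M * norm (x - y)"
  proof -
    have "\<bar>?t\<bar> \<le> \<bar>onesv \<bullet> (x - y)\<bar>"
      by (simp add: inner_diff_right max_def abs_if)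
    then have "norm (?t *\<^sub>R ((R - mat \<alpha>) *v p)) \<le> norm (?M *v (x - y))"
      by (simp add: outer_onesv_mult_vector mult_right_mono)
    also have "\<dots> \<le> opnorm ?M * norm (x - y)"
      by (rule norm_matrix_vector_mult_le_opnorm)
    finally show ?thesis .
  qed
  ultimately show ?thesis
    by (metis (no_types, lifting) add_mono distrib_right norm_triangle_le)
qed

lemma borel_measurable_affine_matrix[measurable]:
  "(\<lambda>z. a + c *\<^sub>R ((\<sigma> :: real^'n^'m) *v z)) \<in> borel_measurable borel"
  by (intro borel_measurable_continuous_onI continuous_intros
      matrix_vector_mult_linear_continuous_on[THEN continuous_on_compose2]) auto

lemma abs_le_supnorm: "bounded (range f) \<Longrightarrow> \<bar>f y\<bar> \<le> supnorm f"
  unfolding supnorm_def bounded_real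
  by (auto intro!: cSUP_upper bdd_aboveI)

lemma std_gauss_affine_expectation_diff_le:
  fixes \<sigma> :: "real^'n^'n" and f :: "real^'n \<Rightarrow> real"
  assumes "invertible \<sigma>" and "\<eta> > 0"
    and [measurable]: "f \<in> borel_measurable borel" and bound: "\<forall>y. \<bar>f y\<bar> \<le> B"
  shows "\<bar>(\<integral>z. f (a + sqrt \<eta> *\<^sub>R (\<sigma> *v z)) \<partial>std_gauss) - (\<integral>z. f (b + sqrt \<eta> *\<^sub>R (\<sigma> *v z)) \<partial>std_gauss)\<bar>
    \<le> B * sqrt (real CARD('n)) * opnorm (matrix_inv \<sigma>) * norm (a - b) / sqrt \<eta>"
proof -
  define F where "F z = f (b + sqrt \<eta> *\<^sub>R (\<sigma> *v z))" for z
  define d where "d = (1 / sqrt \<eta>) *\<^sub>R (matrix_inv \<sigma> *v (a - b))"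
  have B: "0 \<le> B"
    using order_trans[OF abs_ge_zero bound[rule_format]] .
  have "sqrt \<eta> *\<^sub>R (\<sigma> *v d) = a - b"
    using \<open>\<eta> > 0\<close>
    by (simp add: d_def matrix_vector_mult_scaleR matrix_vector_mul_assoc matrix_inv_right[OF assms(1)])
  then have shift: "f (a + sqrt \<eta> *\<^sub>R (\<sigma> *v z)) = F (z + d)" for z
    by (simp add: F_def matrix_vector_right_distrib scaleR_add_right add.commute)
  have "\<bar>(\<integral>z. f (a + sqrt \<eta> *\<^sub>R (\<sigma> *v z)) \<partial>std_gauss) - (\<integral>z. f (b + sqrt \<eta> *\<^sub>R (\<sigma> *v z)) \<partial>std_gauss)\<bar>
      = \<bar>(\<integral>z. F (z + d) \<partial>std_gauss) - (\<integral>z. F z \<partial>std_gauss)\<bar>"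
    by (simp add: shift F_def)
  also have "\<dots> \<le> B * sqrt (real CARD('n)) * norm d"
    by (rule std_gauss_shift_expectation_diff_le) (auto simp: F_def bound)
  also have "norm d \<le> opnorm (matrix_inv \<sigma>) * norm (a - b) / sqrt \<eta>"
    using \<open>\<eta> > 0\<close> norm_matrix_vector_mult_le_opnorm[of "matrix_inv \<sigma>" "a - b"]
    by (simp add: d_def divide_right_mono)
  finally show ?thesis
    using B by (simp add: mult_left_mono mult.assoc)
qed

lemma EM_mean_lipschitz:
  fixes R :: "real^'n^'n"
  assumes "\<eta> \<ge> 0"
  shows "norm ((x + \<eta> *\<^sub>R drift \<alpha> \<beta> p R x) - (y + \<eta> *\<^sub>R drift \<alpha> \<beta> p R y))
    \<le> (1 + (opnorm R + opnorm ((R - mat \<alpha>) ** outer p onesv)) * \<eta>) * norm (x - y)"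
proof -
  have "(x + \<eta> *\<^sub>R drift \<alpha> \<beta> p R x) - (y + \<eta> *\<^sub>R drift \<alpha> \<beta> p R y)
      = (x - y) + \<eta> *\<^sub>R (drift \<alpha> \<beta> p R x - drift \<alpha> \<beta> p R y)"
    by (simp add: algebra_simps)
  also have "norm \<dots> \<le> norm (x - y) + \<eta> * norm (drift \<alpha> \<beta> p R x - drift \<alpha> \<beta> p R y)"
    using norm_triangle_ineq[of "x - y" "\<eta> *\<^sub>R (drift \<alpha> \<beta> p R x - drift \<alpha> \<beta> p R y)"] assms
    by simp
  also have "\<dots> \<le> norm (x - y) + \<eta> * ((opnorm R + opnorm ((R - mat \<alpha>) ** outer p onesv)) * norm (x - y))"
    using assms by (intro add_left_mono mult_left_mono drift_lipschitz)
  finally show ?thesis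
    by (simp add: algebra_simps)
qed

lemma EM_op_dist_le:
  fixes \<sigma> R :: "real^'n^'n"
  assumes "invertible \<sigma>" and "\<eta> > 0"
    and [measurable]: "f \<in> borel_measurable borel" and bound: "\<forall>y. \<bar>f y\<bar> \<le> B"
  shows "dist (EM_op \<eta> \<alpha> \<beta> p R \<sigma> f x) (EM_op \<eta> \<alpha> \<beta> p R \<sigma> f y)
    \<le> B * sqrt (real CARD('n)) * opnorm (matrix_inv \<sigma>)
       * ((1 + (opnorm R + opnorm ((R - mat \<alpha>) ** outer p onesv)) * \<eta>) * norm (x - y)) / sqrt \<eta>"
proof -
  have "B \<ge> 0"
    using bound order_trans[OF abs_ge_zero] by blast
  have "dist (EM_op \<eta> \<alpha> \<beta> p R \<sigma> f x) (EM_op \<eta> \<alpha> \<beta> p R \<sigma> f y)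
      \<le> B * sqrt (real CARD('n)) * opnorm (matrix_inv \<sigma>)
        * norm ((x + \<eta> *\<^sub>R drift \<alpha> \<beta> p R x) - (y + \<eta> *\<^sub>R drift \<alpha> \<beta> p R y)) / sqrt \<eta>"
    unfolding EM_op_def dist_real_def
    by (rule std_gauss_affine_expectation_diff_le[OF assms])
  also have "\<dots> \<le> B * sqrt (real CARD('n)) * opnorm (matrix_inv \<sigma>)
      * ((1 + (opnorm R + opnorm ((R - mat \<alpha>) ** outer p onesv)) * \<eta>) * norm (x - y)) / sqrt \<eta>"
    using EM_mean_lipschitz[of \<eta> x \<alpha> \<beta> p R y] \<open>\<eta> > 0\<close> \<open>B \<ge> 0\<close>
    by (intro divide_right_mono mult_left_mono mult_nonneg_nonneg opnorm_nonneg) auto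
  finally show ?thesis .
qed

lemma EM_op_lipschitz:
  fixes \<sigma> R :: "real^'n^'n"
  assumes "invertible \<sigma>" and "\<eta> > 0"
    and [measurable]: "f \<in> borel_measurable borel" and "bounded (range f)"
  shows "lipschitz_on
          (supnorm f * (1 + (opnorm R + opnorm ((R - mat \<alpha>) ** outer p onesv)) * \<eta>)
             * (opnorm (matrix_inv \<sigma>))\<^sup>2 * opnorm \<sigma> * \<eta> powr (-1/2) * sqrt (real CARD('n)))
          UNIV (EM_op \<eta> \<alpha> \<beta> p R \<sigma> f)"
proof -
  define C where "C = opnorm R + opnorm ((R - mat \<alpha>) ** outer p onesv)"
  define S where "S = opnorm (matrix_inv \<sigma>)"
  define B where "B = supnorm f"
  have bound: "\<forall>y. \<bar>f y\<bar> \<le> B"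
    using abs_le_supnorm[OF assms(4)] by (simp add: B_def)
  then have "B \<ge> 0"
    using order_trans[OF abs_ge_zero] by blast
  have "C \<ge> 0" "S \<ge> 0"
    unfolding C_def S_def by (intro add_nonneg_nonneg opnorm_nonneg)+
  (* The argument only needs the factor S; the stated constant is weaker since S * opnorm sigma \<ge> 1. *)
  have S_le: "S \<le> S\<^sup>2 * opnorm \<sigma>"
    using mult_left_mono[OF one_le_opnorm_matrix_inv_mult_opnorm[OF assms(1)] \<open>S \<ge> 0\<close>]
    by (simp add: S_def power2_eq_square mult.assoc)
  have powr: "\<eta> powr (-1/2) = 1 / sqrt \<eta>"
    using \<open>\<eta> > 0\<close> by (simp add: powr_minus_divide powr_half_sqrt)
  show ?thesis
    unfolding C_def[symmetric] S_def[symmetric] B_def[symmetric]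
  proof (rule lipschitz_onI)
    fix x y :: "real^'n"
    have "dist (EM_op \<eta> \<alpha> \<beta> p R \<sigma> f x) (EM_op \<eta> \<alpha> \<beta> p R \<sigma> f y)
        \<le> B * sqrt (real CARD('n)) * S * ((1 + C * \<eta>) * norm (x - y)) / sqrt \<eta>"
      unfolding S_def C_def by (rule EM_op_dist_le[OF assms(1-3) bound])
    also have "\<dots> \<le> B * sqrt (real CARD('n)) * (S\<^sup>2 * opnorm \<sigma>) * ((1 + C * \<eta>) * norm (x - y)) / sqrt \<eta>"
      using S_le \<open>\<eta> > 0\<close> \<open>B \<ge> 0\<close> \<open>C \<ge> 0\<close>
      by (intro divide_right_mono mult_right_mono mult_left_mono) auto
    also have "\<dots> = B * (1 + C * \<eta>) * S\<^sup>2 * opnorm \<sigma> * \<eta> powr (-1/2) * sqrt (real CARD('n)) * dist x y"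
      using \<open>\<eta> > 0\<close> unfolding powr dist_norm by (simp add: field_simps)
    finally show "dist (EM_op \<eta> \<alpha> \<beta> p R \<sigma> f x) (EM_op \<eta> \<alpha> \<beta> p R \<sigma> f y)
        \<le> B * (1 + C * \<eta>) * S\<^sup>2 * opnorm \<sigma> * \<eta> powr (-1/2) * sqrt (real CARD('n)) * dist x y" .
  next
    show "0 \<le> B * (1 + C * \<eta>) * S\<^sup>2 * opnorm \<sigma> * \<eta> powr (-1/2) * sqrt (real CARD('n))"
      using \<open>B \<ge> 0\<close> \<open>C \<ge> 0\<close> \<open>\<eta> > 0\<close> by (simp add: opnorm_nonneg)
  qed
qed

lemma EM_op_unit_interval:
  fixes \<sigma> R :: "real^'n^'n"
  assumes "invertible \<sigma>" and "\<eta> > 0"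
    and [measurable]: "h \<in> borel_measurable borel" and h01: "\<forall>z. 0 \<le> h z \<and> h z \<le> 1"
  shows "EM_op \<eta> \<alpha> \<beta> p R \<sigma> h \<in> borel_measurable borel"
    and "0 \<le> EM_op \<eta> \<alpha> \<beta> p R \<sigma> h x" and "EM_op \<eta> \<alpha> \<beta> p R \<sigma> h x \<le> 1"
proof -
  interpret prob_space "std_gauss :: (real^'n) measure"
    by (rule prob_space_std_gauss)
  have "bounded (range h)"
    unfolding bounded_iff using h01 by (intro exI[of _ 1]) auto
  then show "EM_op \<eta> \<alpha> \<beta> p R \<sigma> h \<in> borel_measurable borel"
    using EM_op_lipschitz[OF assms(1-3)]
    by (intro borel_measurable_continuous_onI lipschitz_on_continuous_on)
  let ?G = "\<lambda>z. h (x + \<eta> *\<^sub>R drift \<alpha> \<beta> p R x + sqrt \<eta> *\<^sub>R (\<sigma> *v z))"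
  have "?G \<in> borel_measurable std_gauss"
    unfolding std_gauss_eq_density by measurable
  then have "integrable std_gauss ?G"
    using h01 by (intro integrable_const_bound[where B=1]) auto
  then show "0 \<le> EM_op \<eta> \<alpha> \<beta> p R \<sigma> h x" and "EM_op \<eta> \<alpha> \<beta> p R \<sigma> h x \<le> 1"
    unfolding EM_op_def using h01 by (auto intro!: integral_nonneg_AE integral_le_const)
qed

lemma EM_op_pos:
  fixes \<sigma> R :: "real^'n^'n"
  assumes "invertible \<sigma>" and "\<eta> > 0"
    and [measurable]: "h \<in> borel_measurable borel" and h01: "\<forall>z. 0 \<le> h z \<and> h z \<le> 1"
    and "r > 0" and pos: "\<forall>w\<in>ball y r. h w > 0"
  shows "EM_op \<eta> \<alpha> \<beta> p R \<sigma> h x > 0"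
proof -
  define m where "m = x + \<eta> *\<^sub>R drift \<alpha> \<beta> p R x"
  define z0 where "z0 = (1 / sqrt \<eta>) *\<^sub>R (matrix_inv \<sigma> *v (y - m))"
  define \<rho> where "\<rho> = r / (sqrt \<eta> * (opnorm \<sigma> + 1))"
  have "opnorm \<sigma> \<ge> 0" "sqrt \<eta> > 0"
    using opnorm_nonneg \<open>\<eta> > 0\<close> by auto
  then have "\<rho> > 0"
    using \<open>r > 0\<close> by (simp add: \<rho>_def)
  have centre: "y = m + sqrt \<eta> *\<^sub>R (\<sigma> *v z0)"
    using \<open>sqrt \<eta> > 0\<close>
    by (simp add: z0_def matrix_vector_mult_scaleR matrix_vector_mul_assoc matrix_inv_right[OF assms(1)])
  have "m + sqrt \<eta> *\<^sub>R (\<sigma> *v z) \<in> ball y r" if "z \<in> ball z0 \<rho>" for z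
  proof -
    have "y - (m + sqrt \<eta> *\<^sub>R (\<sigma> *v z)) = sqrt \<eta> *\<^sub>R (\<sigma> *v (z0 - z))"
      unfolding centre by (simp add: matrix_vector_mult_diff_distrib scaleR_diff_right)
    then have "dist y (m + sqrt \<eta> *\<^sub>R (\<sigma> *v z)) = sqrt \<eta> * norm (\<sigma> *v (z0 - z))"
      using \<open>sqrt \<eta> > 0\<close> by (simp add: dist_norm)
    also have "\<dots> \<le> sqrt \<eta> * (opnorm \<sigma> * norm (z0 - z))"
      using \<open>sqrt \<eta> > 0\<close> by (intro mult_left_mono norm_matrix_vector_mult_le_opnorm) auto
    also have "\<dots> < sqrt \<eta> * ((opnorm \<sigma> + 1) * \<rho>)"
    proof -
      have "opnorm \<sigma> * norm (z0 - z) \<le> opnorm \<sigma> * \<rho>"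
        using that \<open>opnorm \<sigma> \<ge> 0\<close> by (intro mult_left_mono) (auto simp: dist_norm)
      then show ?thesis
        using \<open>\<rho> > 0\<close> \<open>sqrt \<eta> > 0\<close> by (simp add: distrib_right)
    qed
    also have "\<dots> = r"
      using \<open>opnorm \<sigma> \<ge> 0\<close> \<open>sqrt \<eta> > 0\<close> by (simp add: \<rho>_def)
    finally show ?thesis
      by simp
  qed
  then show ?thesis
    unfolding EM_op_def m_def using pos \<open>\<rho> > 0\<close> h01
    by (intro std_gauss_expectation_pos[of _ \<rho> z0]) auto
qed

lemma EM_op_funpow_pos:
  fixes \<sigma> R :: "real^'n^'n"
  assumes "invertible \<sigma>" and "\<eta> > 0"
    and "h \<in> borel_measurable borel" and "\<forall>z. 0 \<le> h z \<and> h z \<le> 1"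
    and "r > 0" and "\<forall>w\<in>ball y r. h w > 0"
  shows "((EM_op \<eta> \<alpha> \<beta> p R \<sigma> ^^ Suc j) h) x > 0"
proof -
  let ?T = "EM_op \<eta> \<alpha> \<beta> p R \<sigma>"
  have "(?T ^^ Suc j) h \<in> borel_measurable borel \<and> (\<forall>z. 0 \<le> (?T ^^ Suc j) h z \<and> (?T ^^ Suc j) h z \<le> 1)
      \<and> (\<forall>z. (?T ^^ Suc j) h z > 0)"
  proof (induction j)
    case 0
    show ?case
      using EM_op_unit_interval[OF assms(1-4)] EM_op_pos[OF assms] by simp
  next
    case (Suc j)
    then have "0 < ?T ((?T ^^ Suc j) h) z" for z
      using EM_op_pos[OF assms(1,2), of "(?T ^^ Suc j) h" 1] by auto
    then show ?case
      using EM_op_unit_interval[OF assms(1,2), of "(?T ^^ Suc j) h"] Suc by simp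
  qed
  then show ?thesis
    by blast
qed

lemma EM_op_funpow_indicator_cball_pos:
  fixes \<sigma> R :: "real^'n^'n"
  assumes "invertible \<sigma>" and "\<eta> > 0" and "r > 0" and "k \<ge> 1"
  shows "((EM_op \<eta> \<alpha> \<beta> p R \<sigma> ^^ k) (indicator (cball y r))) x > 0"
proof -
  obtain j where "k = Suc j"
    using \<open>k \<ge> 1\<close> by (cases k) auto
  then show ?thesis
    using EM_op_funpow_pos[OF assms(1,2) borel_measurable_indicator _ \<open>r > 0\<close>, of "cball y r" y]
    by (auto simp: indicator_def)
qed

theorem lemmaA2:
  fixes \<alpha> \<beta> ca2 :: real
    and p v :: "real^'n"
    and P \<sigma> :: "real^'n^'n"
  assumes alpha_pos: "\<alpha> > 0"
    and p_nonneg: "\<forall>i. p $ i \<ge> 0"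
    and p_sum: "(\<Sum>i\<in>UNIV. p $ i) = 1"
    and v_pos: "\<forall>i. v $ i > 0"
    and P_nonneg: "\<forall>i j. P $ i $ j \<ge> 0"
    and P_substoch: "\<forall>i. (\<Sum>j\<in>UNIV. P $ i $ j) \<le> 1"
    and P_diag: "\<forall>i. P $ i $ i = 0"
    and IP_inv: "invertible (mat 1 - P)"
    and R_norm: "onesv \<bullet> (matrix_inv (Rmat P v) *v p) = 1"
    and ca2_pos: "ca2 > 0"
    and sigma_cov: "\<sigma> ** transpose \<sigma> =
        ca2 *\<^sub>R diagm p + H0 p
        + (\<Sum>k\<in>UNIV. ((matrix_inv (Rmat P v) *v p) $ k * v $ k) *\<^sub>R Hk P k)
        + (mat 1 - transpose P) ** diagm v ** diagm (matrix_inv (Rmat P v) *v p) ** (mat 1 - P)"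
    and sigma_pd: "\<exists>c>0. \<forall>\<xi>. \<xi> \<bullet> ((\<sigma> ** transpose \<sigma>) *v \<xi>) \<ge> c * (\<xi> \<bullet> \<xi>)"
  shows
    "(\<forall>\<eta>>0. \<forall>f :: real^'n \<Rightarrow> real. f \<in> borel_measurable borel \<and> bounded (range f) \<longrightarrow>
        lipschitz_on
          (supnorm f * (1 + (opnorm (Rmat P v) + opnorm ((Rmat P v - mat \<alpha>) ** outer p onesv)) * \<eta>)
             * (opnorm (matrix_inv \<sigma>))\<^sup>2 * opnorm \<sigma> * \<eta> powr (-1/2) * sqrt (real CARD('n)))
          UNIV (EM_op \<eta> \<alpha> \<beta> p (Rmat P v) \<sigma> f)
        \<and> continuous_on UNIV (EM_op \<eta> \<alpha> \<beta> p (Rmat P v) \<sigma> f))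
     \<and> (\<forall>\<eta>>0. \<forall>x y :: real^'n. \<forall>r>0. \<forall>k::nat. k \<ge> 1 \<longrightarrow>
        ((EM_op \<eta> \<alpha> \<beta> p (Rmat P v) \<sigma> ^^ k) (indicator (cball y r))) x > 0)"
proof -
  have "invertible \<sigma>"
    using sigma_pd by (rule invertible_if_gram_pos_def)
  then show ?thesis
    using EM_op_lipschitz lipschitz_on_continuous_on EM_op_funpow_indicator_cball_pos by blast
qed

end
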